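(* Let $m\ge1$ and $0<\alpha<\pi$, and set $h=E_m(2\alpha)$. Then $0<h<2$ and $\delta_m(h)=2\pi-2\alpha$.
   Context: $\Gamma$ is the unit circle of $\mathbb{C}$ with arc-length measure $|\cdot|$; $\mathfrak{P}_m(\Gamma)$ is the set of monic algebraic polynomials of degree $m$ all of whose zeros lie on $\Gamma$. For a compact set $Q\subset\Gamma$, $E_m(Q)=\inf\{\max_{z\in Q}|P(z)|:P\in\mathfrak{P}_m(\Gamma)\}$, and $E_m(2\alpha)=\inf\{E_m(Q):Q\subset\Gamma\text{ compact},|Q|=2\alpha\}$. $\mathbb{T}=[0,2\pi)$ with endpoints identified, with Lebesgue measure $\mathrm{mes}$, and for $0\le h\le2$, $\delta_m(h)=\inf\{\mathrm{mes}\{t\in\mathbb{T}:|P(e^{it})|\ge h\}:P\in\mathfrak{P}_m(\Gamma)\}$. *)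

theory Defs
  imports "HOL-Analysis.Analysis" "HOL-Computational_Algebra.Polynomial"
begin

definition monic_circle_polys :: "nat \<Rightarrow> complex poly set" where
  "monic_circle_polys m = {P. degree P = m \<and> lead_coeff P = 1 \<and>
      (\<forall>z. poly P z = 0 \<longrightarrow> cmod z = 1)}"

definition arc_length :: "complex set \<Rightarrow> real" where
  "arc_length Q = measure lebesgue {t \<in> {0..<2*pi}. cis t \<in> Q}"

definition E_set :: "nat \<Rightarrow> complex set \<Rightarrow> real" where
  "E_set m Q = (INF P \<in> monic_circle_polys m. (SUP z \<in> Q. cmod (poly P z)))"

definition E_len :: "nat \<Rightarrow> real \<Rightarrow> real" where
  "E_len m a = (INF Q \<in> {Q. Q \<subseteq> sphere 0 1 \<and> compact Q \<and> arc_length Q = a}. E_set m Q)"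

definition delta :: "nat \<Rightarrow> real \<Rightarrow> real" where
  "delta m h = (INF P \<in> monic_circle_polys m.
      measure lebesgue {t \<in> {0..<2*pi}. cmod (poly P (cis t)) \<ge> h})"

end

theory Submission
  imports Defs "HOL-Computational_Algebra.Fundamental_Theorem_Algebra"
begin

(*
  For m \<ge> 1 and 0 < a < 2 pi put E = E_m(a).  We parametrise the unit circle by
  t \<mapsto> cis t, t \<in> [0, 2 pi), which turns arc length into Lebesgue measure.  The proof rests
  on two facts relating E to sublevel sets of admissible polynomials P:
   (1) if |P(cis t)| < c on a set of measure > a, then E < c: by inner regularity that set
       contains a compact set of measure exactly a, on which max |P| < c;
   (2) E is attained: some admissible P0 has |P0(cis t)| \<le> E on a set of measure \<ge> a.
       This uses that admissible polynomials are products of linear factors with roots on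
       the circle, so the admissible class is compact, plus a limsup argument for measures.
  Level sets {t. |P(cis t)| = c} are finite (they are roots of P(z) conj(P)(1/z) z^m - c^2 z^m),
  hence null.  Then (1) gives delta_m(E) \<ge> 2 pi - a and, applied to z^m + 1, E < 2;
  (2) gives delta_m(E) \<le> 2 pi - a and, as the zero set of P0 is null, E > 0.
  The file develops, in order: the parametrisation and measurability, two facts about
  Lebesgue measure on the line, the structure and compactness of the admissible class,
  properties of E, and finally the theorem with a = 2 alpha.
*)

lemma inj_on_cis_period: "inj_on cis {0..<2*pi}"
proof (rule inj_onI)
  fix t u assume t: "t \<in> {0..<2*pi}" and u: "u \<in> {0..<2*pi}" and "cis t = cis u"
  then have "sin t = sin u \<and> cos t = cos u" by (metis cis.sel)
  then obtain n :: int where n: "t = u + 2*pi*n" using sin_cos_eq_iff by metis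
  have "2*pi * \<bar>real_of_int n\<bar> = \<bar>t - u\<bar>" using n by (simp add: abs_mult)
  also have "\<dots> < 2*pi * 1" using t u by auto
  finally have "\<bar>real_of_int n\<bar> < 1" by simp
  then have "n = 0" by linarith
  then show "t = u" using n by simp
qed

lemma arc_length_cis_image:
  assumes "K \<subseteq> {0..<2*pi}"
  shows "arc_length (cis ` K) = measure lebesgue K"
proof -
  have "{t \<in> {0..<2*pi}. cis t \<in> cis ` K} = K"
    using assms inj_on_cis_period by (auto dest: inj_onD)
  then show ?thesis by (simp add: arc_length_def)
qed

lemma period_Collect_lmeasurable:
  assumes "{t. Q t} \<in> sets borel"
  shows "{t \<in> {0..<2*pi}. Q t} \<in> lmeasurable"
proof -
  have "{t \<in> {0..<2*pi}. Q t} = {0..<2*pi} \<inter> {t. Q t}" by blast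
  also have "\<dots> \<in> lmeasurable"
  proof (rule bounded_set_imp_lmeasurable)
    show "bounded ({0..<2*pi} \<inter> {t. Q t})"
      by (rule bounded_subset[of "{0..2*pi}"]) auto
    show "{0..<2*pi} \<inter> {t. Q t} \<in> sets lebesgue" using assms by (simp add: sets.Int)
  qed
  finally show ?thesis .
qed

lemma period_lmeasurable: "{0..<2*pi::real} \<in> lmeasurable"
  by (rule bounded_set_imp_lmeasurable) (auto intro: bounded_subset[of "{0..2*pi}"])

lemma circle_level_sets_lmeasurable:
  fixes P :: "complex poly"
  shows "{t \<in> {0..<2*pi}. cmod (poly P (cis t)) \<le> c} \<in> lmeasurable"
    and "{t \<in> {0..<2*pi}. cmod (poly P (cis t)) < c} \<in> lmeasurable"
    and "{t \<in> {0..<2*pi}. cmod (poly P (cis t)) = c} \<in> lmeasurable"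
  by (intro period_Collect_lmeasurable borel_closed borel_open closed_Collect_le
      open_Collect_less closed_Collect_eq continuous_intros)+

lemma circle_preimage_lmeasurable:
  assumes "closed Q"
  shows "{t \<in> {0..<2*pi}. cis t \<in> Q} \<in> lmeasurable"
proof (intro period_Collect_lmeasurable borel_closed)
  show "closed {t. cis t \<in> Q}"
    using closed_vimage[OF assms, of cis] continuous_on_cis[OF continuous_on_id]
    by (simp add: vimage_def)
qed

lemma superlevel_measure:
  "measure lebesgue {t \<in> {0..<2*pi}. c \<le> cmod (poly P (cis t))}
     = 2*pi - measure lebesgue {t \<in> {0..<2*pi}. cmod (poly P (cis t)) < c}"
proof -
  have "measure lebesgue {t \<in> {0..<2*pi}. c \<le> cmod (poly P (cis t))}
      = measure lebesgue ({0..<2*pi} - {t \<in> {0..<2*pi}. cmod (poly P (cis t)) < c})"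
    by (rule arg_cong[where f = "measure lebesgue"]) auto
  also have "\<dots> = measure lebesgue {0..<2*pi::real}
      - measure lebesgue {t \<in> {0..<2*pi}. cmod (poly P (cis t)) < c}"
    by (rule measurable_measure_Diff[OF period_lmeasurable])
      (use circle_level_sets_lmeasurable(2) in \<open>auto simp: fmeasurableD\<close>)
  finally show ?thesis by simp
qed

text \<open>A compact set of reals contains compact subsets of every smaller measure: the measure
  of its part left of s grows continuously (indeed 1-Lipschitz) from 0 to the full measure.\<close>
lemma compact_subset_with_measure:
  fixes T :: "real set"
  assumes T: "compact T" and a: "0 \<le> a" "a \<le> measure lebesgue T"
  obtains K where "compact K" "K \<subseteq> T" "measure lebesgue K = a"
proof -
  define g where "g s = measure lebesgue (T \<inter> {..s})" for s
  have cut: "compact (T \<inter> {..s})" for s using T by (simp add: compact_Int_closed)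
  have g_step: "g s \<le> g s' \<and> g s' \<le> g s + (s' - s)" if "s \<le> s'" for s s'
  proof
    show "g s \<le> g s'" unfolding g_def
      by (rule measure_mono_fmeasurable) (use that cut lmeasurable_compact in auto)
    have "g s' \<le> measure lebesgue ((T \<inter> {..s}) \<union> {s..s'})" unfolding g_def
      by (rule measure_mono_fmeasurable) (use cut lmeasurable_compact in \<open>auto intro!: fmeasurable.Un\<close>)
    also have "\<dots> \<le> g s + measure lebesgue {s..s'}" unfolding g_def
      by (rule measure_Un_le) (use cut lmeasurable_compact in auto)
    finally show "g s' \<le> g s + (s' - s)" using that by simp
  qed
  have "1-lipschitz_on UNIV g"
  proof (rule lipschitz_onI)
    show "dist (g x) (g y) \<le> 1 * dist x y" for x y
      using g_step[of x y] g_step[of y x] by (cases "x \<le> y") (auto simp: dist_real_def)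
  qed simp
  then have cont: "continuous_on UNIV g" by (rule lipschitz_on_continuous_on)
  obtain B where B: "\<forall>x\<in>T. \<bar>x\<bar> \<le> B" using T compact_imp_bounded bounded_real by blast
  have "T \<inter> {..-\<bar>B\<bar>-1} = {}" using B by force
  then have low: "g (-\<bar>B\<bar>-1) \<le> a" using a by (simp add: g_def)
  have "T \<inter> {..\<bar>B\<bar>} = T" using B by force
  then have high: "a \<le> g \<bar>B\<bar>" using a by (simp add: g_def)
  have "-\<bar>B\<bar>-1 \<le> \<bar>B\<bar>" by simp
  then obtain s where "g s = a"
    using IVT'[OF low high _ continuous_on_subset[OF cont]] by blast
  then show ?thesis using that cut by (auto simp: g_def)
qed

lemma measure_limsup_ge:
  fixes A :: "nat \<Rightarrow> 'a::euclidean_space set"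
  assumes A: "\<And>n. A n \<in> sets lebesgue" "\<And>n. A n \<subseteq> S" "\<And>n. a \<le> measure lebesgue (A n)"
    and S: "S \<in> lmeasurable" and B: "B \<in> lmeasurable"
    and limsup_in_B: "\<And>t. (\<forall>N. \<exists>n\<ge>N. t \<in> A n) \<Longrightarrow> t \<in> B"
  shows "a \<le> measure lebesgue B"
proof -
  define C where "C N = (\<Union>n. A (N + n))" for N
  have C: "C N \<in> lmeasurable" for N
    by (rule fmeasurableI2[OF S]) (use A in \<open>auto simp: C_def\<close>)
  have "decseq C"
  proof (rule decseq_SucI)
    show "C (Suc N) \<subseteq> C N" for N unfolding C_def by (auto intro!: exI[of _ "Suc _"])
  qed
  then have lim: "(\<lambda>N. measure lebesgue (C N)) \<longlonglongrightarrow> measure lebesgue (\<Inter>N. C N)"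
    by (intro Lim_measure_decseq) (use fmeasurableD[OF C] fmeasurableD2[OF C] in auto)
  have "a \<le> measure lebesgue (C N)" for N
  proof -
    have "A N \<subseteq> C N" unfolding C_def by (metis UNIV_I UN_upper add_0_right)
    then show ?thesis
      using A(3)[of N] measure_mono_fmeasurable[OF _ A(1) C] by fastforce
  qed
  then have "a \<le> measure lebesgue (\<Inter>N. C N)"
    using lim by (intro LIMSEQ_le_const) auto
  also have "\<dots> \<le> measure lebesgue B"
  proof (rule measure_mono_fmeasurable[OF _ _ B])
    show "(\<Inter>N. C N) \<subseteq> B" unfolding C_def by (auto intro!: limsup_in_B intro: le_add1)
    show "(\<Inter>N. C N) \<in> sets lebesgue" using C by (auto simp: fmeasurableD)
  qed
  finally show ?thesis .
qed

lemma circle_root_product_admissible: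
  assumes "\<forall>j<k. cmod (\<rho> j) = 1"
  shows "(\<Prod>j<k. [:-\<rho> j, 1:]) \<in> monic_circle_polys k"
  using assms
proof (induction k)
  case 0
  then show ?case by (simp add: monic_circle_polys_def)
next
  case (Suc k)
  let ?Q = "\<Prod>j<k. [:-\<rho> j, 1:]"
  have Q: "?Q \<in> monic_circle_polys k" using Suc by simp
  then have "?Q \<noteq> 0" "degree ?Q = k" and lead: "lead_coeff ?Q = 1"
    by (auto simp: monic_circle_polys_def)
  then have "degree (?Q * [:-\<rho> k, 1:]) = Suc k" by (subst degree_mult_eq) auto
  moreover have "lead_coeff (?Q * [:-\<rho> k, 1:]) = 1"
    by (subst lead_coeff_mult) (simp only: lead, simp)
  ultimately show ?case using Q Suc.prems by (auto simp: monic_circle_polys_def)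
qed

text \<open>For instance (z - 1)^m is admissible, so every infimum over the class is proper.\<close>
lemma admissible_nonempty: "monic_circle_polys m \<noteq> {}"
  using circle_root_product_admissible[of m "\<lambda>_. 1"] by auto

text \<open>Conversely, by the fundamental theorem of algebra, every admissible polynomial is such a
  product; this is what makes the admissible class compact.\<close>
lemma admissible_factorisation:
  "P \<in> monic_circle_polys k \<Longrightarrow> \<exists>\<rho>. (\<forall>j<k. cmod (\<rho> j) = 1) \<and> P = (\<Prod>j<k. [:-\<rho> j, 1:])"
proof (induction k arbitrary: P)
  case 0
  then have "degree P = 0" "lead_coeff P = 1" by (auto simp: monic_circle_polys_def)
  then have "P = 1" by (metis leading_coeff_0_iff one_poly_eq_simps(1) degree_0_id)
  then show ?case by simp
next
  case (Suc k)
  then have d: "degree P = Suc k" and l: "lead_coeff P = 1"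
    and r: "\<forall>z. poly P z = 0 \<longrightarrow> cmod z = 1"
    by (auto simp: monic_circle_polys_def)
  have "\<not> constant (poly P)" using d by (simp add: constant_degree)
  then obtain z where z: "poly P z = 0" using fundamental_theorem_of_algebra by blast
  then obtain Q where Q: "P = [:-z, 1:] * Q" using poly_eq_0_iff_dvd by (metis dvdE)
  have "Q \<noteq> 0" using Q d by auto
  then have "degree P = 1 + degree Q" unfolding Q by (subst degree_mult_eq) auto
  moreover have "lead_coeff P = lead_coeff Q" unfolding Q by (simp only: lead_coeff_mult) simp
  ultimately have "degree Q = k" "lead_coeff Q = 1" using d l by simp_all
  moreover have "\<forall>w. poly Q w = 0 \<longrightarrow> cmod w = 1" using r Q by auto
  ultimately have "Q \<in> monic_circle_polys k" by (simp add: monic_circle_polys_def)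
  then obtain \<rho> where \<rho>: "\<forall>j<k. cmod (\<rho> j) = 1" "Q = (\<Prod>j<k. [:-\<rho> j, 1:])"
    using Suc.IH by blast
  have "P = (\<Prod>j<Suc k. [:-(\<rho>(k := z)) j, 1:])"
    using Q \<rho>(2) by (simp add: mult.commute)
  moreover have "\<forall>j<Suc k. cmod ((\<rho>(k := z)) j) = 1" using \<rho>(1) r z by (simp add: less_Suc_eq)
  ultimately show ?case by blast
qed

lemma monom_plus_one_admissible:
  assumes "m \<ge> 1"
  shows "monom 1 m + 1 \<in> monic_circle_polys m"
proof -
  have d: "degree (monom (1::complex) m + 1) = m"
    using assms by (subst degree_add_eq_left) (auto simp: degree_monom_eq)
  have "lead_coeff (monom (1::complex) m + 1) = 1" unfolding d using assms by (simp add: coeff_monom)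
  moreover have "cmod z = 1" if "poly (monom 1 m + 1) z = 0" for z :: complex
  proof -
    have "z ^ m = -1" using that by (simp add: poly_monom eq_neg_iff_add_eq_0)
    then have "cmod z ^ m = 1" by (metis norm_minus_cancel norm_one norm_power)
    then show ?thesis using assms power_eq_iff_eq_base[of m "cmod z" 1] by simp
  qed
  ultimately show ?thesis using d by (auto simp: monic_circle_polys_def)
qed

text \<open>A nonconstant admissible P has modulus c at only finitely many points of the circle:
  there P(z) * z^m * conj(P)(1/z) = c^2 z^m, and the polynomial
  P * reflect(conj P) - c^2 z^m does not vanish at 0, since P(0) is nonzero.\<close>
lemma admissible_level_set_finite:
  assumes P: "P \<in> monic_circle_polys m" and m: "m \<ge> 1"
  shows "finite {t \<in> {0..<2*pi}. cmod (poly P (cis t)) = c}"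
proof -
  define R where "R = reflect_poly (map_poly cnj P)"
  define S where "S = P * R - [:complex_of_real (c^2):] * monom 1 m"
  have "degree P = m" "lead_coeff P = 1" "poly P 0 \<noteq> 0"
    using P by (auto simp: monic_circle_polys_def)
  then have dm: "degree (map_poly cnj P) = m" and "lead_coeff (map_poly cnj P) = 1"
    by (simp_all add: degree_map_poly coeff_map_poly)
  then have "poly S 0 = poly P 0" using m by (simp add: S_def R_def poly_monom)
  then have "S \<noteq> 0" using \<open>poly P 0 \<noteq> 0\<close> by auto
  then have fin: "finite {z. poly S z = 0}" by (rule poly_roots_finite)
  have root: "poly S (cis t) = 0" if "cmod (poly P (cis t)) = c" for t
  proof -
    have inv: "inverse (cis t) = cnj (cis t)" by (simp add: cis_cnj)
    have "poly R (cis t) = cis t ^ m * cnj (poly P (cis t))"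
      unfolding R_def poly_reflect_poly_nz[OF cis_neq_zero] dm inv poly_map_poly_cnj complex_cnj_cnj ..
    moreover have "poly P (cis t) * cnj (poly P (cis t)) = complex_of_real (c^2)"
      using complex_norm_square[of "poly P (cis t)"] that by simp
    ultimately show ?thesis by (simp add: S_def poly_monom algebra_simps)
  qed
  have "cis ` {t \<in> {0..<2*pi}. cmod (poly P (cis t)) = c} \<subseteq> {z. poly S z = 0}"
    using root by auto
  then show ?thesis
    using fin finite_subset inj_on_cis_period finite_imageD inj_on_subset
    by (metis (no_types, lifting) mem_Collect_eq subsetI)
qed

lemma admissible_level_set_null:
  assumes "P \<in> monic_circle_polys m" "m \<ge> 1"
  shows "measure lebesgue {t \<in> {0..<2*pi}. cmod (poly P (cis t)) = c} = 0"
  using admissible_level_set_finite[OF assms] by (intro negligible_imp_measure0 negligible_finite)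

lemma admissible_sublevel_measure:
  assumes "P \<in> monic_circle_polys m" "m \<ge> 1"
  shows "measure lebesgue {t \<in> {0..<2*pi}. cmod (poly P (cis t)) \<le> c}
       \<le> measure lebesgue {t \<in> {0..<2*pi}. cmod (poly P (cis t)) < c}"
proof -
  note lm = circle_level_sets_lmeasurable[of P c]
  have "measure lebesgue {t \<in> {0..<2*pi}. cmod (poly P (cis t)) \<le> c}
      \<le> measure lebesgue ({t \<in> {0..<2*pi}. cmod (poly P (cis t)) < c}
                        \<union> {t \<in> {0..<2*pi}. cmod (poly P (cis t)) = c})"
    by (rule measure_mono_fmeasurable) (use lm in \<open>auto simp: fmeasurableD\<close>)
  also have "\<dots> \<le> measure lebesgue {t \<in> {0..<2*pi}. cmod (poly P (cis t)) < c}
                 + measure lebesgue {t \<in> {0..<2*pi}. cmod (poly P (cis t)) = c}"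
    by (rule measure_Un_le) (use lm in \<open>auto simp: fmeasurableD\<close>)
  finally show ?thesis using admissible_level_set_null[OF assms] by simp
qed

lemma monom_plus_one_below_two:
  assumes "m \<ge> 1"
  shows "measure lebesgue {t \<in> {0..<2*pi}. cmod (poly (monom 1 m + 1) (cis t)) < 2} = 2*pi"
proof -
  let ?P = "monom 1 m + 1 :: complex poly"
  have "cmod (poly ?P (cis t)) \<le> 2" for t
    using norm_triangle_ineq[of "cis t ^ m" 1] by (simp add: poly_monom norm_power)
  then have "{t \<in> {0..<2*pi}. 2 \<le> cmod (poly ?P (cis t))} = {t \<in> {0..<2*pi}. cmod (poly ?P (cis t)) = 2}"
    by (auto simp: order.eq_iff)
  then have "measure lebesgue {t \<in> {0..<2*pi}. 2 \<le> cmod (poly ?P (cis t))} = 0"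
    using admissible_level_set_null[OF monom_plus_one_admissible[OF assms] assms] by simp
  then show ?thesis using superlevel_measure[of 2 ?P] by simp
qed

lemma common_convergent_subseq:
  fixes x :: "nat \<Rightarrow> nat \<Rightarrow> 'a::metric_space"
  assumes S: "compact S" and x: "\<forall>n. \<forall>j<k. x n j \<in> S"
  shows "\<exists>r l. strict_mono r \<and> (\<forall>j<k. l j \<in> S \<and> (\<lambda>n. x (r n) j) \<longlonglongrightarrow> l j)"
  using x
proof (induction k)
  case 0
  have "strict_mono (id :: nat \<Rightarrow> nat)" by (simp add: strict_mono_def)
  then show ?case by blast
next
  case (Suc k)
  then obtain r l where r: "strict_mono r" and l: "\<forall>j<k. l j \<in> S \<and> (\<lambda>n. x (r n) j) \<longlonglongrightarrow> l j"
    by auto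
  obtain l' r' where l': "l' \<in> S" "strict_mono r'" "((\<lambda>n. x (r n) k) \<circ> r') \<longlonglongrightarrow> l'"
  proof (rule seq_compactE[OF compact_imp_seq_compact[OF S]])
    show "\<forall>n. x (r n) k \<in> S" using Suc.prems by simp
  qed
  have "\<forall>j<Suc k. (l(k := l')) j \<in> S \<and> (\<lambda>n. x ((r \<circ> r') n) j) \<longlonglongrightarrow> (l(k := l')) j"
  proof (intro allI impI)
    fix j assume "j < Suc k"
    then consider "j < k" | "j = k" by linarith
    then show "(l(k := l')) j \<in> S \<and> (\<lambda>n. x ((r \<circ> r') n) j) \<longlonglongrightarrow> (l(k := l')) j"
    proof cases
      case 1
      then show ?thesis
        using l LIMSEQ_subseq_LIMSEQ[OF _ l'(2), of "\<lambda>n. x (r n) j"] by (simp add: o_def)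
    next
      case 2
      then show ?thesis using l' by (simp add: o_def)
    qed
  qed
  then show ?case using strict_mono_o[OF r l'(2)] by blast
qed

lemma admissible_convergent_subseq:
  fixes P :: "nat \<Rightarrow> complex poly"
  assumes "\<And>n. P n \<in> monic_circle_polys m"
  obtains r P0 where "strict_mono r" "P0 \<in> monic_circle_polys m"
    "\<And>z. (\<lambda>n. poly (P (r n)) z) \<longlonglongrightarrow> poly P0 z"
proof -
  have "\<forall>n. \<exists>\<rho>. (\<forall>j<m. cmod (\<rho> j) = 1) \<and> P n = (\<Prod>j<m. [:-\<rho> j, 1:])"
    using admissible_factorisation assms by blast
  then obtain \<rho> where \<rho>: "\<And>n. \<forall>j<m. \<rho> n j \<in> sphere 0 1"
    and P: "\<And>n. P n = (\<Prod>j<m. [:-\<rho> n j, 1:])"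
    by (metis mem_sphere_0)
  obtain r l where r: "strict_mono r"
    and l: "\<forall>j<m. l j \<in> sphere 0 1 \<and> (\<lambda>n. \<rho> (r n) j) \<longlonglongrightarrow> l j"
    using common_convergent_subseq[OF compact_sphere, of m \<rho> 0 1] \<rho> by blast
  have "(\<lambda>n. poly (P (r n)) z) \<longlonglongrightarrow> poly (\<Prod>j<m. [:-l j, 1:]) z" for z
  proof -
    have "(\<lambda>n. \<Prod>j<m. z - \<rho> (r n) j) \<longlonglongrightarrow> (\<Prod>j<m. z - l j)"
      using l by (intro tendsto_prod tendsto_diff tendsto_const) auto
    then show ?thesis unfolding P by (simp add: poly_prod)
  qed
  moreover have "(\<Prod>j<m. [:-l j, 1:]) \<in> monic_circle_polys m"
    using l by (intro circle_root_product_admissible) auto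
  ultimately show ?thesis using that r by blast
qed

lemma sup_norm_poly_upper:
  assumes "compact Q" "z \<in> Q"
  shows "cmod (poly P z) \<le> (SUP z\<in>Q. cmod (poly P z))"
  using assms
  by (intro cSUP_upper bounded_imp_bdd_above compact_imp_bounded compact_continuous_image
      continuous_intros)

lemma sup_norm_poly_nonneg:
  assumes "compact Q" "Q \<noteq> {}"
  shows "0 \<le> (SUP z\<in>Q. cmod (poly P z))"
proof -
  obtain z where "z \<in> Q" using assms(2) by blast
  then show ?thesis using sup_norm_poly_upper[OF assms(1)] norm_ge_zero order_trans by blast
qed

lemma E_set_nonneg:
  assumes "compact Q" "Q \<noteq> {}"
  shows "0 \<le> E_set m Q"
  unfolding E_set_def
  by (rule cINF_greatest[OF admissible_nonempty sup_norm_poly_nonneg[OF assms]])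

lemma bdd_below_sup_norm_poly:
  assumes "compact Q" "Q \<noteq> {}"
  shows "bdd_below ((\<lambda>P. SUP z\<in>Q. cmod (poly P z)) ` monic_circle_polys m)"
  by (rule bdd_belowI[of _ 0]) (use sup_norm_poly_nonneg[OF assms] in blast)

lemma E_set_le:
  assumes "P \<in> monic_circle_polys m" "compact Q" "Q \<noteq> {}"
  shows "E_set m Q \<le> (SUP z\<in>Q. cmod (poly P z))"
  unfolding E_set_def
  by (rule cINF_lower[OF bdd_below_sup_norm_poly[OF assms(2,3)] assms(1)])

definition arc_sets :: "real \<Rightarrow> complex set set" where
  "arc_sets a = {Q. Q \<subseteq> sphere 0 1 \<and> compact Q \<and> arc_length Q = a}"

lemma E_len_arc_sets: "E_len m a = (INF Q\<in>arc_sets a. E_set m Q)"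
  by (simp add: E_len_def arc_sets_def)

lemma arc_sets_member_nonempty: "Q \<in> arc_sets a \<Longrightarrow> 0 < a \<Longrightarrow> Q \<noteq> {}"
  by (auto simp: arc_sets_def arc_length_def)

lemma cis_image_arc_sets:
  assumes "K \<subseteq> {0..<2*pi}" "compact K"
  shows "cis ` K \<in> arc_sets (measure lebesgue K)"
  using assms arc_length_cis_image[OF assms(1)]
  by (auto simp: arc_sets_def intro!: compact_continuous_image continuous_intros)

lemma arc_sets_nonempty:
  assumes "0 \<le> a" "a < 2*pi"
  shows "arc_sets a \<noteq> {}"
proof -
  have "cis ` {0..a} \<in> arc_sets (measure lebesgue {0..a})"
    using assms by (intro cis_image_arc_sets) auto
  then show ?thesis using assms by auto
qed

lemma bdd_below_E_set: "0 < a \<Longrightarrow> bdd_below (E_set m ` arc_sets a)"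
  by (rule bdd_belowI[of _ 0])
    (use E_set_nonneg arc_sets_member_nonempty in \<open>auto simp: arc_sets_def\<close>)

lemma E_len_less:
  assumes a: "0 < a" and P: "P \<in> monic_circle_polys m"
    and big: "a < measure lebesgue {t \<in> {0..<2*pi}. cmod (poly P (cis t)) < c}"
  shows "E_len m a < c"
proof -
  let ?U = "{t \<in> {0..<2*pi}. cmod (poly P (cis t)) < c}"
  have U: "?U \<in> lmeasurable" by (rule circle_level_sets_lmeasurable)
  have "0 < measure lebesgue ?U - a" using big by simp
  then obtain T where T: "closed T" "T \<subseteq> ?U" "?U - T \<in> lmeasurable"
      "emeasure lebesgue (?U - T) < ennreal (measure lebesgue ?U - a)"
    by (rule sets_lebesgue_inner_closed[OF fmeasurableD[OF U]])
  have "T \<subseteq> {0..2*pi}" using T(2) by auto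
  then have "bounded T" by (rule bounded_subset[rotated]) simp
  then have "compact T" using T(1) compact_eq_bounded_closed by blast
  have "measure lebesgue (?U - T) = measure lebesgue ?U - measure lebesgue T"
    using T(2) by (intro measurable_measure_Diff U fmeasurableD lmeasurable_compact \<open>compact T\<close>)
  moreover have "measure lebesgue (?U - T) < measure lebesgue ?U - a"
  proof -
    have "emeasure lebesgue (?U - T) = ennreal (measure lebesgue (?U - T))"
      by (rule emeasure_eq_measure2[OF T(3)])
    then have "ennreal (measure lebesgue (?U - T)) < ennreal (measure lebesgue ?U - a)"
      using T(4) by simp
    then show ?thesis by (simp add: ennreal_less_iff)
  qed
  ultimately have "a \<le> measure lebesgue T" by linarith
  then obtain K where K: "compact K" "K \<subseteq> T" "measure lebesgue K = a"
    by (rule compact_subset_with_measure[OF \<open>compact T\<close> less_imp_le[OF a]])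
  have "K \<noteq> {}" using K(3) a by force
  have "continuous_on K (\<lambda>t. cmod (poly P (cis t)))" by (intro continuous_intros)
  then obtain t0 where t0: "t0 \<in> K" "\<forall>t\<in>K. cmod (poly P (cis t)) \<le> cmod (poly P (cis t0))"
    using continuous_attains_sup[OF K(1) \<open>K \<noteq> {}\<close>] by blast
  have KU: "K \<subseteq> {0..<2*pi}" using K(2) T(2) by auto
  have Q: "cis ` K \<in> arc_sets a" using cis_image_arc_sets[OF KU K(1)] K(3) by simp
  have "E_len m a \<le> E_set m (cis ` K)"
    unfolding E_len_arc_sets by (rule cINF_lower[OF bdd_below_E_set[OF a] Q])
  also have "\<dots> \<le> (SUP z\<in>cis ` K. cmod (poly P z))"
    using \<open>K \<noteq> {}\<close> by (intro E_set_le[OF P] compact_continuous_image continuous_intros K(1)) auto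
  also have "\<dots> \<le> cmod (poly P (cis t0))"
    using t0 \<open>K \<noteq> {}\<close> by (intro cSUP_least) auto
  also have "\<dots> < c" using t0(1) K(2) T(2) by auto
  finally show ?thesis .
qed

lemma E_len_approx:
  assumes a: "0 < a" "a < 2*pi" and e: "0 < e"
  obtains P where "P \<in> monic_circle_polys m"
    "a \<le> measure lebesgue {t \<in> {0..<2*pi}. cmod (poly P (cis t)) \<le> E_len m a + e}"
proof -
  have "(INF Q\<in>arc_sets a. E_set m Q) < E_len m a + e"
    unfolding E_len_arc_sets using e by simp
  then obtain Q where Q: "Q \<in> arc_sets a" "E_set m Q < E_len m a + e"
    using cINF_less_iff[OF arc_sets_nonempty[OF less_imp_le[OF a(1)] a(2)] bdd_below_E_set[OF a(1)]]
    by blast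
  have Qc: "compact Q" "arc_length Q = a" "Q \<noteq> {}"
    using Q(1) arc_sets_member_nonempty a by (auto simp: arc_sets_def)
  obtain P where P: "P \<in> monic_circle_polys m" "(SUP z\<in>Q. cmod (poly P z)) < E_len m a + e"
    using Q(2)[unfolded E_set_def] cINF_less_iff[OF admissible_nonempty bdd_below_sup_norm_poly[OF Qc(1,3)]]
    by blast
  have sub: "{t \<in> {0..<2*pi}. cis t \<in> Q} \<subseteq> {t \<in> {0..<2*pi}. cmod (poly P (cis t)) \<le> E_len m a + e}"
  proof
    fix t assume "t \<in> {t \<in> {0..<2*pi}. cis t \<in> Q}"
    then have "t \<in> {0..<2*pi}" "cis t \<in> Q" by auto
    then show "t \<in> {t \<in> {0..<2*pi}. cmod (poly P (cis t)) \<le> E_len m a + e}"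
      using sup_norm_poly_upper[OF Qc(1) \<open>cis t \<in> Q\<close>, of P] P(2) by auto
  qed
  have "a = measure lebesgue {t \<in> {0..<2*pi}. cis t \<in> Q}"
    using Qc(2) unfolding arc_length_def by (rule sym)
  also have "\<dots> \<le> measure lebesgue {t \<in> {0..<2*pi}. cmod (poly P (cis t)) \<le> E_len m a + e}"
    by (rule measure_mono_fmeasurable[OF sub
          fmeasurableD[OF circle_preimage_lmeasurable[OF compact_imp_closed[OF Qc(1)]]]
          circle_level_sets_lmeasurable(1)])
  finally show ?thesis by (rule that[OF P(1)])
qed

text \<open>Fact (2): E_m(a) is attained, via a pointwise limit of near-extremal polynomials.\<close>
lemma E_len_attained:
  assumes a: "0 < a" "a < 2*pi"
  obtains P0 where "P0 \<in> monic_circle_polys m"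
    "a \<le> measure lebesgue {t \<in> {0..<2*pi}. cmod (poly P0 (cis t)) \<le> E_len m a}"
proof -
  define h where "h = E_len m a"
  define A where "A P e = {t \<in> {0..<2*pi}. cmod (poly P (cis t)) \<le> h + e}" for P e
  have near: "\<exists>P. P \<in> monic_circle_polys m \<and> a \<le> measure lebesgue (A P (inverse (real (Suc n))))" for n
  proof -
    have "0 < inverse (real (Suc n))" by simp
    then obtain P where "P \<in> monic_circle_polys m"
      "a \<le> measure lebesgue {t \<in> {0..<2*pi}. cmod (poly P (cis t)) \<le> E_len m a + inverse (real (Suc n))}"
      by (rule E_len_approx[OF a])
    then show ?thesis unfolding A_def h_def by blast
  qed
  define P where "P n = (SOME P. P \<in> monic_circle_polys m
      \<and> a \<le> measure lebesgue (A P (inverse (real (Suc n)))))" for n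
  have P: "\<And>n. P n \<in> monic_circle_polys m"
    "\<And>n. a \<le> measure lebesgue (A (P n) (inverse (real (Suc n))))"
    using someI_ex[OF near] unfolding P_def by blast+
  obtain r P0 where r: "strict_mono r" and P0: "P0 \<in> monic_circle_polys m"
    and lim: "\<And>z. (\<lambda>n. poly (P (r n)) z) \<longlonglongrightarrow> poly P0 z"
    using admissible_convergent_subseq[where P = P, OF P(1)] by blast
  have "a \<le> measure lebesgue (A P0 0)"
  proof (rule measure_limsup_ge[of "\<lambda>n. A (P (r n)) (inverse (real (Suc (r n))))"])
    show "A (P (r n)) (inverse (real (Suc (r n)))) \<in> sets lebesgue" for n
      unfolding A_def by (rule fmeasurableD[OF circle_level_sets_lmeasurable(1)])
    show "A (P (r n)) (inverse (real (Suc (r n)))) \<subseteq> {0..<2*pi}" for n by (auto simp: A_def)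
    show "{0..<2*pi::real} \<in> lmeasurable" by (rule period_lmeasurable)
    show "A P0 0 \<in> lmeasurable" unfolding A_def by (rule circle_level_sets_lmeasurable(1))
    show "a \<le> measure lebesgue (A (P (r n)) (inverse (real (Suc (r n)))))" for n by (rule P(2))
    fix t assume freq: "\<forall>N. \<exists>n\<ge>N. t \<in> A (P (r n)) (inverse (real (Suc (r n))))"
    then have t: "t \<in> {0..<2*pi}" by (auto simp: A_def)
    txt \<open>Along the subsequence, |P (r n) (cis t)| minus the tolerance tends to |P0 (cis t)|
      and is infinitely often at most h.\<close>
    define f where "f n = cmod (poly (P (r n)) (cis t)) - inverse (real (Suc (r n)))" for n
    have "f \<longlonglongrightarrow> cmod (poly P0 (cis t)) - 0"
      unfolding f_def using LIMSEQ_subseq_LIMSEQ[OF LIMSEQ_inverse_real_of_nat r]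
      by (intro tendsto_diff tendsto_norm lim) (simp add: o_def)
    then have f_lim: "f \<longlonglongrightarrow> cmod (poly P0 (cis t))" by simp
    have f_freq: "\<exists>n\<ge>N. f n \<le> h" for N
    proof -
      obtain n where "n \<ge> N" "t \<in> A (P (r n)) (inverse (real (Suc (r n))))" using freq by blast
      then show ?thesis unfolding A_def f_def by auto
    qed
    have "cmod (poly P0 (cis t)) \<le> h"
    proof (rule ccontr)
      assume "\<not> cmod (poly P0 (cis t)) \<le> h"
      then have "\<forall>\<^sub>F n in sequentially. h < f n" using f_lim by (intro order_tendstoD(1)) auto
      then obtain N where "\<And>n. n \<ge> N \<Longrightarrow> h < f n" unfolding eventually_sequentially by blast
      then show False using f_freq[of N] by force
    qed
    then show "t \<in> A P0 0" using t by (simp add: A_def)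
  qed
  then have "a \<le> measure lebesgue {t \<in> {0..<2*pi}. cmod (poly P0 (cis t)) \<le> E_len m a}"
    by (simp only: A_def h_def add_0_right)
  then show ?thesis by (rule that[OF P0])
qed

lemma E_len_pos:
  assumes "m \<ge> 1" "0 < a" "a < 2*pi"
  shows "0 < E_len m a"
proof (rule ccontr)
  assume nonpos: "\<not> 0 < E_len m a"
  obtain P0 where P0: "P0 \<in> monic_circle_polys m"
    "a \<le> measure lebesgue {t \<in> {0..<2*pi}. cmod (poly P0 (cis t)) \<le> E_len m a}"
    by (rule E_len_attained[OF assms(2,3)])
  have "{t \<in> {0..<2*pi}. cmod (poly P0 (cis t)) \<le> E_len m a}
      \<subseteq> {t \<in> {0..<2*pi}. cmod (poly P0 (cis t)) = 0}"
  proof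
    fix t assume "t \<in> {t \<in> {0..<2*pi}. cmod (poly P0 (cis t)) \<le> E_len m a}"
    then have "t \<in> {0..<2*pi}" "cmod (poly P0 (cis t)) \<le> E_len m a" by auto
    moreover from this(2) have "cmod (poly P0 (cis t)) = 0"
      using nonpos norm_ge_zero[of "poly P0 (cis t)"] by linarith
    ultimately show "t \<in> {t \<in> {0..<2*pi}. cmod (poly P0 (cis t)) = 0}" by blast
  qed
  then have "measure lebesgue {t \<in> {0..<2*pi}. cmod (poly P0 (cis t)) \<le> E_len m a}
      \<le> measure lebesgue {t \<in> {0..<2*pi}. cmod (poly P0 (cis t)) = 0}"
    by (rule measure_mono_fmeasurable[OF _ fmeasurableD[OF circle_level_sets_lmeasurable(1)]
          circle_level_sets_lmeasurable(3)])
  then show False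
    using P0(2) admissible_level_set_null[OF P0(1) assms(1), of 0] assms(2) by linarith
qed

lemma E_len_less_two:
  assumes "m \<ge> 1" "0 < a" "a < 2*pi"
  shows "E_len m a < 2"
  by (rule E_len_less[OF assms(2) monom_plus_one_admissible[OF assms(1)]])
    (simp only: monom_plus_one_below_two[OF assms(1)] assms(3))

lemma delta_E_len_ge:
  assumes "0 < a"
  shows "2*pi - a \<le> delta m (E_len m a)"
  unfolding delta_def
proof (rule cINF_greatest[OF admissible_nonempty])
  fix P assume P: "P \<in> monic_circle_polys m"
  have "\<not> a < measure lebesgue {t \<in> {0..<2*pi}. cmod (poly P (cis t)) < E_len m a}"
    using E_len_less[OF assms P, of "E_len m a"] by blast
  then show "2*pi - a \<le> measure lebesgue {t \<in> {0..<2*pi}. E_len m a \<le> cmod (poly P (cis t))}"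
    using superlevel_measure[of "E_len m a" P] by linarith
qed

lemma delta_E_len_le:
  assumes "m \<ge> 1" "0 < a" "a < 2*pi"
  shows "delta m (E_len m a) \<le> 2*pi - a"
proof -
  obtain P0 where P0: "P0 \<in> monic_circle_polys m"
    "a \<le> measure lebesgue {t \<in> {0..<2*pi}. cmod (poly P0 (cis t)) \<le> E_len m a}"
    by (rule E_len_attained[OF assms(2,3)])
  have "delta m (E_len m a)
      \<le> measure lebesgue {t \<in> {0..<2*pi}. E_len m a \<le> cmod (poly P0 (cis t))}"
    unfolding delta_def by (rule cINF_lower[OF bdd_belowI[of _ 0] P0(1)]) auto
  also have "\<dots> \<le> 2*pi - a"
    using superlevel_measure[of "E_len m a" P0] P0(2)
      admissible_sublevel_measure[OF P0(1) assms(1), of "E_len m a"] by linarith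
  finally show ?thesis .
qed

theorem theorem3:
  fixes m :: nat and \<alpha> h :: real
  assumes "m \<ge> 1" and "0 < \<alpha>" and "\<alpha> < pi"
    and "h = E_len m (2 * \<alpha>)"
  shows "0 < h \<and> h < 2 \<and> delta m h = 2 * pi - 2 * \<alpha>"
proof -
  have a: "0 < 2*\<alpha>" "2*\<alpha> < 2*pi" using assms(2,3) by auto
  show ?thesis
    using E_len_pos[OF assms(1) a] E_len_less_two[OF assms(1) a]
      delta_E_len_ge[OF a(1), of m] delta_E_len_le[OF assms(1) a] assms(4)
    by simp
qed

end
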